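(* Let $m>0$, let $f(r,z)$ be a smooth function on $[\tfrac m2,\infty)\times[-1,1]$, $J,c$ constants, and $\omega=f(1-z^2)^2+J(z^3-3z)+c$ with $z=\cos\theta$. Set $K_{\varphi\theta}=\omega_{,r}/\sin\theta$, $K_{\varphi r}=-\omega_{,\theta}/(r^2\sin\theta)$, and $$P_J=2\int_{m/2}^\infty dr\,\varrho(r)\,r\int_{-1}^1\big(K_{\varphi\theta}^2+r^2K_{\varphi r}^2\big)\frac{dz}{1-z^2},\qquad \varrho(r)=\frac{m(1-\frac m{2r})}{4r^3(1+\frac m{2r})^7}.$$ Then for each $r$, $\int_{-1}^1\frac{\omega_{,z}^2}{1-z^2}dz=\int_{-1}^1\frac{\tilde\omega_{,z}^2}{1-z^2}dz+12J^2$ where $\tilde\omega=f(1-z^2)^2$, and consequently $$P_J\ge\frac{J^2}{4m^2},$$ with equality if and only if $f\equiv0$. *)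

theory Defs
  imports "HOL-Analysis.Analysis"
begin

fun Ck_on2 :: "nat \<Rightarrow> (real \<times> real) set \<Rightarrow> (real \<times> real \<Rightarrow> real) \<Rightarrow> bool" where
  "Ck_on2 0 S g \<longleftrightarrow> continuous_on S g"
| "Ck_on2 (Suc k) S g \<longleftrightarrow>
     (\<exists>D1 D2. (\<forall>x\<in>S. (g has_derivative (\<lambda>h. fst h * D1 x + snd h * D2 x)) (at x within S))
            \<and> Ck_on2 k S D1 \<and> Ck_on2 k S D2)"

definition smooth_on2 :: "(real \<times> real) set \<Rightarrow> (real \<times> real \<Rightarrow> real) \<Rightarrow> bool" where
  "smooth_on2 S g \<longleftrightarrow> (\<forall>k. Ck_on2 k S g)"

definition omega :: "(real \<Rightarrow> real \<Rightarrow> real) \<Rightarrow> real \<Rightarrow> real \<Rightarrow> real \<Rightarrow> real \<Rightarrow> real" where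
  "omega f J c r z = f r z * (1 - z^2)^2 + J * (z^3 - 3 * z) + c"

definition omega_tilde :: "(real \<Rightarrow> real \<Rightarrow> real) \<Rightarrow> real \<Rightarrow> real \<Rightarrow> real" where
  "omega_tilde f r z = f r z * (1 - z^2)^2"

definition K_phitheta :: "(real \<Rightarrow> real \<Rightarrow> real) \<Rightarrow> real \<Rightarrow> real \<Rightarrow> real \<Rightarrow> real \<Rightarrow> real" where
  "K_phitheta f J c r \<theta> = deriv (\<lambda>s. omega f J c s (cos \<theta>)) r / sin \<theta>"

definition K_phir :: "(real \<Rightarrow> real \<Rightarrow> real) \<Rightarrow> real \<Rightarrow> real \<Rightarrow> real \<Rightarrow> real \<Rightarrow> real" where
  "K_phir f J c r \<theta> = - deriv (\<lambda>t. omega f J c r (cos t)) \<theta> / (r^2 * sin \<theta>)"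

definition rho :: "real \<Rightarrow> real \<Rightarrow> real" where
  "rho m r = m * (1 - m / (2 * r)) / (4 * r^3 * (1 + m / (2 * r))^7)"

definition PJ :: "real \<Rightarrow> (real \<Rightarrow> real \<Rightarrow> real) \<Rightarrow> real \<Rightarrow> real \<Rightarrow> ennreal" where
  "PJ m f J c =
     (\<integral>\<^sup>+ r \<in> {m/2..}. ennreal (2 * rho m r * r) *
        (\<integral>\<^sup>+ z \<in> {-1..1}.
           ennreal (((K_phitheta f J c r (arccos z))^2 + r^2 * (K_phir f J c r (arccos z))^2)
                    / (1 - z^2)) \<partial>lborel) \<partial>lborel)"

end

theory Submission
  imports Defs "HOL-Real_Asymp.Real_Asymp"
begin

text \<open>With \<open>z = cos \<theta>\<close>, both \<open>\<omega>\<^sup>~ = f (1 - z\<^sup>2)\<^sup>2\<close> and \<open>J (z\<^sup>3 - 3z)\<close> have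
  \<open>z\<close>-derivatives divisible by \<open>1 - z\<^sup>2\<close>: \<open>\<omega>\<^sub>,\<^sub>z = (1 - z\<^sup>2) (\<alpha> - 3J)\<close> with
  \<open>\<alpha> = f\<^sub>,\<^sub>z (1 - z\<^sup>2) - 4 z f\<close>. So \<open>\<omega>\<^sub>,\<^sub>z\<^sup>2 / (1 - z\<^sup>2) = (1 - z\<^sup>2) (\<alpha> - 3J)\<^sup>2\<close>;
  expanding the square, the cross term integrates to \<open>\<omega>\<^sup>~(1) - \<omega>\<^sup>~(-1) = 0\<close> and the
  last term to \<open>12 J\<^sup>2\<close>. Since \<open>r\<^sup>2 K\<^sub>\<phi>\<^sub>r\<^sup>2 = \<omega>\<^sub>,\<^sub>z\<^sup>2 / r\<^sup>2\<close>, the constant \<open>12 J\<^sup>2\<close> contributes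
  \<open>24 J\<^sup>2 \<integral> \<rho>(r) / r dr = J\<^sup>2 / (4m\<^sup>2)\<close> to \<open>P\<^sub>J\<close>, and the rest is the same integral
  for \<open>\<omega>\<^sup>~\<close> alone. Its \<open>z\<close>-integrand depends continuously on \<open>r\<close>, so it vanishes only if
  \<open>\<alpha> \<equiv> 0\<close>, i.e. if \<open>\<omega>\<^sup>~(r, \<cdot>)\<close> is constant; as \<open>\<omega>\<^sup>~\<close> vanishes at the poles, then \<open>f = 0\<close>.\<close>

lemma rho_eq:
  assumes "r > 0" "m > 0"
  shows "rho m r = 16 * m * r^3 * (2*r - m) / (2*r + m)^7"
proof -
  have frac: "1 + m/(2*r) = (2*r + m)/(2*r)" "1 - m/(2*r) = (2*r - m)/(2*r)"
    using assms by (auto simp: field_simps)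
  have cancel: "m * (u/(2*r)) / (4*r^3 * (w/(2*r)^7)) = 16*m*r^3*u/w" if "w > 0" for u w
    using assms that by (simp add: field_simps power_mult_distrib eval_nat_numeral)
  have "(2*r + m)^7 > 0" using assms by simp
  then show ?thesis unfolding rho_def frac power_divide by (rule cancel)
qed

lemma rho_pos: "m > 0 \<Longrightarrow> m/2 < r \<Longrightarrow> 0 < rho m r"
  by (simp add: rho_eq)

lemma rho_nonneg: "m > 0 \<Longrightarrow> m/2 \<le> r \<Longrightarrow> 0 \<le> rho m r"
  by (simp add: rho_eq)

lemma has_real_derivative_cube_div_pow6:
  fixes m r :: real
  assumes "2*r + m \<noteq> 0"
  shows "((\<lambda>r. r^3 / (2*r + m)^6) has_real_derivative 3 * r^2 * (m - 2*r) / (2*r + m)^7) (at r)"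
proof -
  have "((\<lambda>r. r^3 / (2*r + m)^6) has_real_derivative
      (3 * r^2 * (2*r + m)^6 - r^3 * (6 * (2 * (2*r + m)^5))) / ((2*r + m)^6 * (2*r + m)^6)) (at r)"
    using assms by (auto intro!: derivative_eq_intros)
  moreover have "(3 * r^2 * w^6 - r^3 * (6 * (2 * w^5))) / (w^6 * w^6) = 3 * r^2 * (m - 2*r) / w^7"
    if "w = 2*r + m" "w \<noteq> 0" for w
  proof -
    have "3 * r^2 * w^6 - r^3 * (6 * (2 * w^5)) = w^5 * (3 * r^2 * (m - 2*r))"
      using that(1) by (simp add: algebra_simps eval_nat_numeral)
    moreover have "w^6 * w^6 = w^5 * w^7"
      by (simp add: power_add[symmetric])
    moreover have "w^5 * (3 * r^2 * (m - 2*r)) / (w^5 * w^7) = 3 * r^2 * (m - 2*r) / w^7"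
      using that(2) by (rule nonzero_mult_divide_mult_cancel_left[OF power_not_zero])
    ultimately show ?thesis by simp
  qed
  ultimately show ?thesis using assms by simp
qed

lemma has_real_derivative_rho_div_antiderivative:
  assumes "r > 0" "m > 0"
  shows "((\<lambda>r. - 16/3 * m * (r^3 / (2*r + m)^6)) has_real_derivative rho m r / r) (at r)"
proof -
  have "- 16/3 * m * (3 * r^2 * (m - 2*r) / w) = 16 * m * r^3 * (2*r - m) / w / r" if "w \<noteq> 0" for w
    using assms that by (simp add: field_simps power3_eq_cube power2_eq_square)
  from this[of "(2*r + m)^7"] have "- 16/3 * m * (3 * r^2 * (m - 2*r) / (2*r + m)^7) = rho m r / r"
    using assms by (simp add: rho_eq)
  with assms show ?thesis
    using DERIV_cmult[OF has_real_derivative_cube_div_pow6, of r m "- 16/3 * m"] by simp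
qed

lemma nn_integral_rho_div:
  assumes "m > 0"
  shows "(\<integral>\<^sup>+ r \<in> {m/2..}. ennreal (rho m r / r) \<partial>lborel) = ennreal (1 / (96 * m^2))"
proof -
  have "(\<integral>\<^sup>+ r \<in> {m/2..}. ennreal (rho m r / r) \<partial>lborel)
      = ennreal (0 - (- 16/3 * m * ((m/2)^3 / (2*(m/2) + m)^6)))"
  proof (rule nn_integral_FTC_atLeast)
    show "(\<lambda>r. rho m r / r) \<in> borel_measurable borel" unfolding rho_def by measurable
    fix r assume "m/2 \<le> r"
    then have "r > 0" using assms by simp
    with assms(1) show "((\<lambda>r. - 16/3 * m * (r^3 / (2*r + m)^6)) has_real_derivative rho m r / r) (at r)"
      by (intro has_real_derivative_rho_div_antiderivative)
    show "0 \<le> rho m r / r"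
      using assms \<open>m/2 \<le> r\<close> \<open>r > 0\<close> by (simp add: rho_nonneg)
  next
    show "((\<lambda>r. - 16/3 * m * (r^3 / (2*r + m)^6)) \<longlongrightarrow> 0) at_top" using assms by real_asymp
  qed
  also have "0 - (- 16/3 * m * ((m/2)^3 / (2*(m/2) + m)^6)) = 1 / (96 * m^2)"
    using assms by (simp add: field_simps eval_nat_numeral)
  finally show ?thesis .
qed

lemma continuous_on_rho:
  assumes "0 < m"
  shows "continuous_on {m/2..} (rho m)"
proof -
  have "0 < 1 + m / (2 * r)" if "m/2 \<le> r" for r
    using assms that by (intro add_pos_pos divide_pos_pos) auto
  then show ?thesis
    unfolding rho_def using assms by (intro continuous_intros) force+
qed

lemma continuous_on_Pair_fiber:
  assumes "continuous_on (A \<times> B) g" "x \<in> A"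
  shows "continuous_on B (\<lambda>y. g (x, y))"
  by (rule continuous_on_compose2[OF assms(1), where f = "\<lambda>y. (x, y)"])
     (use assms(2) in \<open>auto intro: continuous_intros\<close>)

lemma one_minus_square_nonneg: "-1 \<le> z \<Longrightarrow> z \<le> 1 \<Longrightarrow> 0 \<le> 1 - (z::real)^2"
  by (simp add: abs_square_le_1)

lemma one_minus_square_pos: "-1 < z \<Longrightarrow> z < 1 \<Longrightarrow> 0 < 1 - (z::real)^2"
  by (simp add: abs_square_less_1 abs_less_iff)

lemma borel_measurable_ennreal_indicator_continuous_on:
  fixes g :: "'a::topological_space \<Rightarrow> real"
  assumes "A \<in> sets borel" "continuous_on A g"
  shows "(\<lambda>x. ennreal (g x) * indicator A x) \<in> borel_measurable borel"
proof -
  have "(\<lambda>x. ennreal (indicator A x *\<^sub>R g x)) \<in> borel_measurable borel"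
    using borel_measurable_continuous_on_indicator[OF assms] by measurable
  then show ?thesis
    by (rule measurable_cong[THEN iffD1, rotated]) (simp add: indicator_def)
qed

lemma continuous_eq_0_if_nn_integral_eq_0:
  fixes g :: "real \<Rightarrow> real"
  assumes cont: "continuous_on {u..} g" and nonneg: "\<And>x. u \<le> x \<Longrightarrow> 0 \<le> g x"
    and zero: "(\<integral>\<^sup>+ x \<in> {u..}. ennreal (g x) \<partial>lborel) = 0" and x: "u \<le> x"
  shows "g x = 0"
proof -
  define v where "v = x + 1"
  have cont_uv: "continuous_on {u..v} g"
    using cont by (rule continuous_on_subset) auto
  then have int: "(g has_integral integral {u..v} g) {u..v}"
    by (intro integrable_integral integrable_continuous_interval)
  have "ennreal (integral {u..v} g) = (\<integral>\<^sup>+ x \<in> {u..v}. ennreal (g x) \<partial>lborel)"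
    by (rule nn_integral_has_integral_lebesgue'[symmetric]) (use nonneg int in auto)
  also have "\<dots> \<le> (\<integral>\<^sup>+ x \<in> {u..}. ennreal (g x) \<partial>lborel)"
    by (intro nn_integral_mono) (auto simp: indicator_def)
  finally have "integral {u..v} g \<le> 0"
    using zero by (simp add: ennreal_eq_0_iff)
  moreover have "0 \<le> integral {u..v} g"
    by (rule has_integral_nonneg[OF int]) (use nonneg in auto)
  ultimately have "(g has_integral 0) (cbox u v)"
    using int by simp
  then show "g x = 0"
    by (rule has_integral_0_cbox_imp_0[rotated 2]) (use cont_uv nonneg x in \<open>auto simp: v_def\<close>)
qed

locale C1_on_half_strip =
  fixes a :: real and f :: "real \<Rightarrow> real \<Rightarrow> real" and D1 D2 :: "real \<times> real \<Rightarrow> real"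
  assumes continuous_f: "continuous_on ({a..} \<times> {-1..1}) (\<lambda>(r, z). f r z)"
    and has_derivative_f: "\<And>p. p \<in> {a..} \<times> {-1..1} \<Longrightarrow>
      ((\<lambda>(r, z). f r z) has_derivative (\<lambda>h. fst h * D1 p + snd h * D2 p)) (at p within {a..} \<times> {-1..1})"
    and continuous_D1: "continuous_on ({a..} \<times> {-1..1}) D1"
    and continuous_D2: "continuous_on ({a..} \<times> {-1..1}) D2"
begin

lemma has_field_derivative_f_z:
  assumes "a \<le> r" "z \<in> {-1..1}"
  shows "((\<lambda>y. f r y) has_real_derivative D2 (r, z)) (at z within {-1..1})"
proof -
  have "((\<lambda>(r, z). f r z) \<circ> (\<lambda>y. (r, y)) has_derivative
      (\<lambda>h. fst h * D1 (r, z) + snd h * D2 (r, z)) \<circ> (\<lambda>h. (0, h))) (at z within {-1..1})"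
  proof (rule diff_chain_within)
    show "((\<lambda>y. (r, y)) has_derivative (\<lambda>h. (0, h))) (at z within {-1..1})"
      by (auto intro!: derivative_eq_intros)
    show "((\<lambda>(r, z). f r z) has_derivative (\<lambda>h. fst h * D1 (r, z) + snd h * D2 (r, z)))
        (at (r, z) within (\<lambda>y. (r, y)) ` {-1..1})"
      by (rule has_derivative_subset[OF has_derivative_f]) (use assms in auto)
  qed
  then show ?thesis
    unfolding has_field_derivative_def by (simp add: o_def mult_commute_abs)
qed

lemma has_field_derivative_f_r:
  assumes "a < r" "z \<in> {-1..1}"
  shows "((\<lambda>s. f s z) has_real_derivative D1 (r, z)) (at r)"
proof -
  have "((\<lambda>(r, z). f r z) \<circ> (\<lambda>s. (s, z)) has_derivative
      (\<lambda>h. fst h * D1 (r, z) + snd h * D2 (r, z)) \<circ> (\<lambda>h. (h, 0))) (at r within {a..})"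
  proof (rule diff_chain_within)
    show "((\<lambda>s. (s, z)) has_derivative (\<lambda>h. (h, 0))) (at r within {a..})"
      by (auto intro!: derivative_eq_intros)
    show "((\<lambda>(r, z). f r z) has_derivative (\<lambda>h. fst h * D1 (r, z) + snd h * D2 (r, z)))
        (at (r, z) within (\<lambda>s. (s, z)) ` {a..})"
      by (rule has_derivative_subset[OF has_derivative_f]) (use assms in auto)
  qed
  moreover have "at r within {a..} = at r"
    using assms by (intro at_within_interior) simp
  ultimately show ?thesis
    unfolding has_field_derivative_def by (simp add: o_def mult_commute_abs)
qed

text \<open>This is \<open>\<alpha>\<close>, with \<open>\<omega>\<^sup>~\<^sub>,\<^sub>z = (1 - z\<^sup>2) \<alpha>\<close>; dividing out \<open>1 - z\<^sup>2\<close> makes the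
  integrands regular at the poles \<open>z = \<plusminus>1\<close>.\<close>
definition reduced_dz :: "real \<Rightarrow> real \<Rightarrow> real" where
  "reduced_dz r z = D2 (r, z) * (1 - z^2) - 4 * z * f r z"

lemma continuous_on_reduced_dz: "continuous_on ({a..} \<times> {-1..1}) (\<lambda>(r, z). reduced_dz r z)"
proof -
  have "continuous_on ({a..} \<times> {-1..1}) (\<lambda>p. D2 p * (1 - (snd p)^2) - 4 * snd p * (\<lambda>(r, z). f r z) p)"
    by (intro continuous_intros continuous_D2 continuous_f)
  then show ?thesis
    by (simp add: reduced_dz_def case_prod_beta')
qed

lemma has_field_derivative_omega_z:
  assumes "a \<le> r" "z \<in> {-1..1}"
  shows "((\<lambda>y. omega f J c r y) has_real_derivative (1 - z^2) * (reduced_dz r z - 3 * J))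
      (at z within {-1..1})"
  unfolding omega_def
  by (rule derivative_eq_intros has_field_derivative_f_z[OF assms] refl)+
     (simp add: reduced_dz_def algebra_simps power2_eq_square)

lemma omega_tilde_eq_omega: "omega_tilde f r z = omega f 0 0 r z"
  by (simp add: omega_def omega_tilde_def)

lemma has_field_derivative_omega_z_at:
  assumes "a \<le> r" "-1 < z" "z < 1"
  shows "((\<lambda>y. omega f J c r y) has_real_derivative (1 - z^2) * (reduced_dz r z - 3 * J)) (at z)"
  using has_field_derivative_omega_z[of r z] assms at_within_Icc_at[of "-1" z 1] by simp

text \<open>At the poles both sides vanish, the left one because \<open>x / 0 = 0\<close>.\<close>
lemma deriv_omega_z_square_div:
  assumes "a \<le> r" "z \<in> {-1..1}"
  shows "(deriv (\<lambda>y. omega f J c r y) z)^2 / (1 - z^2) = (reduced_dz r z - 3 * J)^2 * (1 - z^2)"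
proof -
  consider "z = -1" | "z = 1" | "-1 < z" "z < 1" using assms(2) by force
  then show ?thesis
  proof cases
    case 3
    then have "1 - z^2 \<noteq> 0" using one_minus_square_pos by force
    then have "((1 - z^2) * B)^2 / (1 - z^2) = B^2 * (1 - z^2)" for B
      by (simp add: power2_eq_square field_simps)
    then show ?thesis
      using DERIV_imp_deriv[OF has_field_derivative_omega_z_at[OF assms(1) 3]] by simp
  qed simp_all
qed

definition angular_energy :: "real \<Rightarrow> real" where
  "angular_energy r = integral {-1..1} (\<lambda>z. (reduced_dz r z)^2 * (1 - z^2))"

lemma has_integral_angular_energy:
  assumes "a \<le> r"
  shows "((\<lambda>z. (reduced_dz r z)^2 * (1 - z^2)) has_integral angular_energy r) {-1..1}"
  unfolding angular_energy_def using assms continuous_on_Pair_fiber[OF continuous_on_reduced_dz]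
  by (intro integrable_integral integrable_continuous_interval continuous_intros) auto

lemma continuous_on_angular_energy: "continuous_on {a..} angular_energy"
proof -
  have "continuous_on ({a..} \<times> {-1..1}) (\<lambda>p. ((\<lambda>(r, z). reduced_dz r z) p)^2 * (1 - (snd p)^2))"
    by (intro continuous_intros continuous_on_reduced_dz)
  then show ?thesis
    unfolding angular_energy_def
    using integral_continuous_on_param[of "{a..}" "-1" 1 "\<lambda>r z. (reduced_dz r z)^2 * (1 - z^2)"]
    by (simp add: case_prod_beta')
qed

lemma angular_energy_nonneg: "a \<le> r \<Longrightarrow> 0 \<le> angular_energy r"
  by (rule has_integral_nonneg[OF has_integral_angular_energy])
     (auto intro!: mult_nonneg_nonneg one_minus_square_nonneg)

lemma has_integral_omega_z_energy:
  assumes "a \<le> r"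
  shows "((\<lambda>z. (reduced_dz r z - 3 * J)^2 * (1 - z^2)) has_integral angular_energy r + 12 * J^2) {-1..1}"
proof -
  have cross: "((\<lambda>z. (1 - z^2) * reduced_dz r z) has_integral 0) {-1..1}"
    using fundamental_theorem_of_calculus[of "-1" 1 "\<lambda>y. omega f 0 0 r y"]
      has_field_derivative_omega_z[OF assms, of _ 0 0]
    by (simp add: has_real_derivative_iff_has_vector_derivative[symmetric] omega_def)
  have square: "((\<lambda>z. 9 * J^2 * (1 - z^2)) has_integral 12 * J^2) {-1..1}"
  proof -
    have "((\<lambda>z. 9 * J^2 * (1 - z^2)) has_integral
        (\<lambda>z. 9 * J^2 * (z - z^3/3)) 1 - (\<lambda>z. 9 * J^2 * (z - z^3/3)) (-1)) {-1..1}"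
      by (rule fundamental_theorem_of_calculus)
         (auto simp: has_real_derivative_iff_has_vector_derivative[symmetric]
           intro!: derivative_eq_intros)
    then show ?thesis by simp
  qed
  have "((\<lambda>z. (reduced_dz r z)^2 * (1 - z^2) - 6 * J * ((1 - z^2) * reduced_dz r z)
      + 9 * J^2 * (1 - z^2)) has_integral angular_energy r - 6 * J * 0 + 12 * J^2) {-1..1}"
    by (intro has_integral_add has_integral_diff has_integral_mult_right
        has_integral_angular_energy[OF assms] cross square)
  then show ?thesis
    by (simp add: power2_eq_square algebra_simps)
qed

lemma nn_integral_deriv_omega_z_square_div:
  assumes "a \<le> r"
  shows "(\<integral>\<^sup>+ z \<in> {-1..1}. ennreal ((deriv (\<lambda>y. omega f J c r y) z)^2 / (1 - z^2)) \<partial>lborel)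
    = ennreal (angular_energy r + 12 * J^2)"
proof -
  have "(\<integral>\<^sup>+ z \<in> {-1..1}. ennreal ((deriv (\<lambda>y. omega f J c r y) z)^2 / (1 - z^2)) \<partial>lborel)
      = (\<integral>\<^sup>+ z \<in> {-1..1}. ennreal ((reduced_dz r z - 3 * J)^2 * (1 - z^2)) \<partial>lborel)"
    using deriv_omega_z_square_div[OF assms] by (intro nn_integral_cong) (simp add: indicator_def)
  also have "\<dots> = ennreal (angular_energy r + 12 * J^2)"
    by (intro nn_integral_has_integral_lebesgue' has_integral_omega_z_energy[OF assms])
       (auto intro!: mult_nonneg_nonneg one_minus_square_nonneg)
  finally show ?thesis .
qed

lemma nn_integral_deriv_omega_z_square_div_eq_tilde:
  assumes "a \<le> r"
  shows "(\<integral>\<^sup>+ z \<in> {-1..1}. ennreal ((deriv (\<lambda>y. omega f J c r y) z)^2 / (1 - z^2)) \<partial>lborel)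
    = (\<integral>\<^sup>+ z \<in> {-1..1}. ennreal ((deriv (\<lambda>y. omega_tilde f r y) z)^2 / (1 - z^2)) \<partial>lborel)
      + ennreal (12 * J^2)"
  using nn_integral_deriv_omega_z_square_div[OF assms, of J c]
    nn_integral_deriv_omega_z_square_div[OF assms, of 0 0] angular_energy_nonneg[OF assms]
  by (simp add: omega_tilde_eq_omega ennreal_plus)

lemma K_square_sum_div:
  assumes "a < r" "r \<noteq> 0" "z \<in> {-1..1}"
  shows "((K_phitheta f J c r (arccos z))^2 + r^2 * (K_phir f J c r (arccos z))^2) / (1 - z^2)
    = (D1 (r, z))^2 * (1 - z^2)^2 + (reduced_dz r z - 3 * J)^2 * (1 - z^2) / r^2"
proof -
  have z: "-1 \<le> z" "z \<le> 1" using assms(3) by auto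
  have cos: "cos (arccos z) = z" and sin: "sin (arccos z) = sqrt (1 - z^2)"
    using z by (simp_all add: cos_arccos sin_arccos)
  have "((\<lambda>s. omega f J c s z) has_real_derivative D1 (r, z) * (1 - z^2)^2) (at r)"
    unfolding omega_def
    by (rule derivative_eq_intros has_field_derivative_f_r[OF assms(1,3)] refl)+ simp
  then have deriv_r: "deriv (\<lambda>s. omega f J c s z) r = D1 (r, z) * (1 - z^2)^2"
    by (rule DERIV_imp_deriv)
  consider "z = -1" | "z = 1" | "-1 < z" "z < 1" using z by force
  then show ?thesis
  proof cases
    case 3
    define q where "q = sqrt (1 - z^2)"
    have q: "q > 0" "1 - z^2 = q^2"
      using one_minus_square_pos[OF 3] by (simp_all add: q_def)
    have "((\<lambda>t. omega f J c r (cos t)) has_real_derivative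
        (1 - z^2) * (reduced_dz r z - 3 * J) * (- sin (arccos z))) (at (arccos z))"
      by (rule DERIV_chain2[where f = "\<lambda>y. omega f J c r y"])
         (use has_field_derivative_omega_z_at[OF _ 3, of r J c] assms(1) cos
           in \<open>auto intro!: derivative_eq_intros\<close>)
    then have deriv_theta: "deriv (\<lambda>t. omega f J c r (cos t)) (arccos z) = (1 - z^2) * (reduced_dz r z - 3 * J) * (- q)"
      unfolding sin q_def by (rule DERIV_imp_deriv)
    have "((d * (q^2)^2 / q)^2 + r^2 * (- ((q^2) * B * (- q)) / (r^2 * q))^2) / q^2
        = d^2 * (q^2)^2 + B^2 * q^2 / r^2" for d B
      using q assms(2) by (simp add: field_simps eval_nat_numeral)
    then show ?thesis
      unfolding K_phitheta_def K_phir_def cos deriv_r deriv_theta sin q_def[symmetric]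
      unfolding q(2) .
  qed (simp_all add: K_phitheta_def K_phir_def sin)
qed

definition radial_energy :: "real \<Rightarrow> real" where
  "radial_energy r = integral {-1..1} (\<lambda>z. (D1 (r, z))^2 * (1 - z^2)^2)"

lemma has_integral_radial_energy:
  assumes "a \<le> r"
  shows "((\<lambda>z. (D1 (r, z))^2 * (1 - z^2)^2) has_integral radial_energy r) {-1..1}"
  unfolding radial_energy_def using assms continuous_on_Pair_fiber[OF continuous_D1]
  by (intro integrable_integral integrable_continuous_interval continuous_intros) auto

lemma radial_energy_nonneg: "a \<le> r \<Longrightarrow> 0 \<le> radial_energy r"
  by (rule has_integral_nonneg[OF has_integral_radial_energy]) auto

lemma continuous_on_radial_energy: "continuous_on {a..} radial_energy"
proof -
  have "continuous_on ({a..} \<times> {-1..1}) (\<lambda>p. (D1 p)^2 * (1 - (snd p)^2)^2)"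
    by (intro continuous_intros continuous_D1)
  then show ?thesis
    unfolding radial_energy_def
    using integral_continuous_on_param[of "{a..}" "-1" 1 "\<lambda>r z. (D1 (r, z))^2 * (1 - z^2)^2"]
    by (simp add: case_prod_beta')
qed

definition tilde_energy :: "real \<Rightarrow> real" where
  "tilde_energy r = radial_energy r + angular_energy r / r^2"

lemma tilde_energy_nonneg: "a \<le> r \<Longrightarrow> 0 \<le> tilde_energy r"
  unfolding tilde_energy_def using radial_energy_nonneg angular_energy_nonneg by simp

lemma continuous_on_tilde_energy: "0 < a \<Longrightarrow> continuous_on {a..} tilde_energy"
  unfolding tilde_energy_def
  using continuous_on_radial_energy continuous_on_angular_energy
  by (auto intro!: continuous_intros)

lemma nn_integral_K_square_sum_div:
  assumes "a < r" "r \<noteq> 0"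
  shows "(\<integral>\<^sup>+ z \<in> {-1..1}. ennreal (((K_phitheta f J c r (arccos z))^2
      + r^2 * (K_phir f J c r (arccos z))^2) / (1 - z^2)) \<partial>lborel)
    = ennreal (tilde_energy r + 12 * J^2 / r^2)"
proof -
  have r: "a \<le> r" using assms by simp
  have "(\<integral>\<^sup>+ z \<in> {-1..1}. ennreal (((K_phitheta f J c r (arccos z))^2
      + r^2 * (K_phir f J c r (arccos z))^2) / (1 - z^2)) \<partial>lborel)
    = (\<integral>\<^sup>+ z \<in> {-1..1}. ennreal ((D1 (r, z))^2 * (1 - z^2)^2
      + (reduced_dz r z - 3 * J)^2 * (1 - z^2) / r^2) \<partial>lborel)"
    using K_square_sum_div[OF assms] by (intro nn_integral_cong) (simp add: indicator_def)
  also have "\<dots> = ennreal (radial_energy r + (angular_energy r + 12 * J^2) / r^2)"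
    by (intro nn_integral_has_integral_lebesgue' has_integral_add has_integral_divide
        has_integral_radial_energy[OF r] has_integral_omega_z_energy[OF r])
       (auto intro!: add_nonneg_nonneg mult_nonneg_nonneg divide_nonneg_nonneg one_minus_square_nonneg)
  finally show ?thesis
    by (simp add: tilde_energy_def add_divide_distrib add.assoc)
qed

lemma tilde_energy_eq_0_if_f_eq_0:
  assumes f0: "\<And>r z. a \<le> r \<Longrightarrow> z \<in> {-1..1} \<Longrightarrow> f r z = 0" and r: "a < r"
  shows "tilde_energy r = 0"
proof -
  have D1: "D1 (r, z) = 0" if z: "z \<in> {-1..1}" for z
  proof -
    have "((\<lambda>s. f s z) has_real_derivative 0) (at r)"
      by (rule has_field_derivative_transform_within_open[of "\<lambda>s. 0" 0 r "{a<..}"])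
         (use f0 r z in auto)
    then show ?thesis
      using DERIV_unique[OF has_field_derivative_f_r[OF r z]] by simp
  qed
  have reduced_dz: "reduced_dz r z = 0" if z: "z \<in> {-1..1}" for z
  proof (cases "-1 < z \<and> z < 1")
    case True
    have "((\<lambda>y. f r y) has_real_derivative 0) (at z)"
      by (rule has_field_derivative_transform_within_open[of "\<lambda>s. 0" 0 z "{-1<..<1}"])
         (use f0 r True in auto)
    moreover have "((\<lambda>y. f r y) has_real_derivative D2 (r, z)) (at z)"
      using has_field_derivative_f_z[of r z] r z True at_within_Icc_at[of "-1" z 1] by simp
    ultimately have "D2 (r, z) = 0"
      using DERIV_unique by blast
    then show ?thesis using f0 r z by (simp add: reduced_dz_def)
  next
    case False
    then have "1 - z^2 = 0" using z by auto
    then show ?thesis using f0 r z by (simp add: reduced_dz_def)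
  qed
  have "radial_energy r = 0"
    unfolding radial_energy_def by (intro integral_unique has_integral_is_0) (simp add: D1)
  moreover have "angular_energy r = 0"
    unfolding angular_energy_def by (intro integral_unique has_integral_is_0) (simp add: reduced_dz)
  ultimately show ?thesis
    by (simp add: tilde_energy_def)
qed

lemma reduced_dz_eq_0_if_angular_energy_eq_0:
  assumes "a \<le> r" "angular_energy r = 0" "-1 < z" "z < 1"
  shows "reduced_dz r z = 0"
proof -
  have "(reduced_dz r z)^2 * (1 - z^2) = 0"
  proof (rule has_integral_0_cbox_imp_0[of "-1" 1 "\<lambda>z. (reduced_dz r z)^2 * (1 - z^2)"])
    show "continuous_on (cbox (-1) 1) (\<lambda>z. (reduced_dz r z)^2 * (1 - z^2))"
      using assms(1) continuous_on_Pair_fiber[OF continuous_on_reduced_dz]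
      by (auto intro!: continuous_intros)
    show "((\<lambda>z. (reduced_dz r z)^2 * (1 - z^2)) has_integral 0) (cbox (-1) 1)"
      using has_integral_angular_energy[OF assms(1)] assms(2) by simp
  qed (use assms(3,4) one_minus_square_nonneg in auto)
  then show ?thesis
    using one_minus_square_pos[OF assms(3,4)] by simp
qed

lemma omega_tilde_eq_0_if_reduced_dz_eq_0:
  assumes "a \<le> r" "\<And>z. -1 < z \<Longrightarrow> z < 1 \<Longrightarrow> reduced_dz r z = 0" "z \<in> {-1..1}"
  shows "omega_tilde f r z = 0"
proof -
  have "\<exists>k. \<forall>y\<in>{-1..1}. omega f 0 0 r y = k"
  proof (rule has_field_derivative_zero_constant)
    fix y :: real assume y: "y \<in> {-1..1}"
    then have "(1 - y^2) * (reduced_dz r y - 3 * 0) = 0"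
      using assms(2)[of y] by (cases "-1 < y \<and> y < 1") auto
    with has_field_derivative_omega_z[OF assms(1) y, of 0 0]
    show "((\<lambda>y. omega f 0 0 r y) has_real_derivative 0) (at y within {-1..1})"
      by (simp only:)
  qed simp
  then have "omega f 0 0 r z = omega f 0 0 r (-1)"
    using assms(3) by force
  then show ?thesis
    by (simp add: omega_tilde_eq_omega) (simp add: omega_def)
qed

lemma f_eq_0_if_eq_0_on_interior:
  assumes "\<And>r z. a < r \<Longrightarrow> -1 < z \<Longrightarrow> z < 1 \<Longrightarrow> f r z = 0" "a \<le> r" "z \<in> {-1..1}"
  shows "f r z = 0"
proof -
  have "(\<lambda>(r, z). f r z) (r, z) = 0"
    by (rule continuous_constant_on_closure[of "{a<..} \<times> {-1<..<1}"])
       (use continuous_f assms in \<open>auto simp: closure_Times\<close>)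
  then show ?thesis by simp
qed

lemma f_eq_0_if_tilde_energy_eq_0:
  assumes "0 \<le> a" "\<And>r. a < r \<Longrightarrow> tilde_energy r = 0" "a \<le> r" "z \<in> {-1..1}"
  shows "f r z = 0"
proof (rule f_eq_0_if_eq_0_on_interior[OF _ assms(3,4)])
  fix r z :: real assume r: "a < r" and z: "-1 < z" "z < 1"
  have "0 \<le> radial_energy r" "0 \<le> angular_energy r / r^2"
    using radial_energy_nonneg[of r] angular_energy_nonneg[of r] r by auto
  moreover have "radial_energy r + angular_energy r / r^2 = 0"
    using assms(2)[OF r] by (simp add: tilde_energy_def)
  ultimately have "angular_energy r / r^2 = 0"
    by linarith
  then have "angular_energy r = 0"
    using r assms(1) by simp
  then have "omega_tilde f r z = 0"
    using r z by (intro omega_tilde_eq_0_if_reduced_dz_eq_0 reduced_dz_eq_0_if_angular_energy_eq_0) auto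
  then show "f r z = 0"
    using one_minus_square_pos[OF z] by (simp add: omega_tilde_def)
qed

end

lemma smooth_on2_imp_C1_on_half_strip:
  assumes "smooth_on2 ({a..} \<times> {-1..1}) (\<lambda>(r, z). f r z)"
  obtains D1 D2 where "C1_on_half_strip a f D1 D2"
proof -
  have "Ck_on2 0 ({a..} \<times> {-1..1}) (\<lambda>(r, z). f r z)" "Ck_on2 1 ({a..} \<times> {-1..1}) (\<lambda>(r, z). f r z)"
    using assms unfolding smooth_on2_def by blast+
  then obtain D1 D2 where
    "continuous_on ({a..} \<times> {-1..1}) (\<lambda>(r, z). f r z)"
    "\<forall>p\<in>{a..} \<times> {-1..1}. ((\<lambda>(r, z). f r z) has_derivative (\<lambda>h. fst h * D1 p + snd h * D2 p))
       (at p within {a..} \<times> {-1..1})"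
    "continuous_on ({a..} \<times> {-1..1}) D1" "continuous_on ({a..} \<times> {-1..1}) D2"
    by auto
  then show ?thesis
    by (intro that[of D1 D2]) (unfold_locales, auto)
qed

locale PJ_setting = C1_on_half_strip "m / 2" f D1 D2 for m f D1 D2 +
  assumes m_pos: "0 < m"
begin

lemma PJ_eq_nn_integral_tilde_energy:
  "PJ m f J c = ennreal (J^2 / (4 * m^2))
     + (\<integral>\<^sup>+ r \<in> {m/2..}. ennreal (2 * rho m r * r * tilde_energy r) \<partial>lborel)"
proof -
  have split: "ennreal (2 * rho m r * r) * (\<integral>\<^sup>+ z \<in> {-1..1}. ennreal (((K_phitheta f J c r (arccos z))^2
        + r^2 * (K_phir f J c r (arccos z))^2) / (1 - z^2)) \<partial>lborel) * indicator {m/2..} r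
      = ennreal (24 * J^2) * (ennreal (rho m r / r) * indicator {m/2..} r)
        + ennreal (2 * rho m r * r * tilde_energy r) * indicator {m/2..} r" for r
  proof -
    consider "r < m/2" | "r = m/2" | "m/2 < r" by linarith
    then show ?thesis
    proof cases
      case 2
      then have "rho m r = 0" using m_pos by (simp add: rho_def)
      then show ?thesis by simp
    next
      case 3
      then have r: "0 < r" "r \<noteq> 0" using m_pos by auto
      have nonneg: "0 \<le> rho m r" "0 \<le> tilde_energy r"
        using rho_nonneg[OF m_pos] tilde_energy_nonneg 3 by auto
      have "2 * rho m r * r * (tilde_energy r + 12 * J^2 / r^2)
          = 24 * J^2 * (rho m r / r) + 2 * rho m r * r * tilde_energy r"
        using r by (simp add: field_simps power2_eq_square)
      then show ?thesis
        using 3 r nonneg nn_integral_K_square_sum_div[OF 3 r(2)]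
        by (simp add: ennreal_mult[symmetric] ennreal_plus[symmetric] del: ennreal_plus)
    qed simp
  qed
  have meas_rho: "(\<lambda>r. ennreal (rho m r / r) * indicator {m/2..} r) \<in> borel_measurable lborel"
    unfolding rho_def by measurable
  have meas_tilde: "(\<lambda>r. ennreal (2 * rho m r * r * tilde_energy r) * indicator {m/2..} r) \<in> borel_measurable lborel"
    using m_pos continuous_on_rho continuous_on_tilde_energy
    by (auto intro!: borel_measurable_ennreal_indicator_continuous_on continuous_intros)
  have "PJ m f J c = ennreal (24 * J^2) * (\<integral>\<^sup>+ r \<in> {m/2..}. ennreal (rho m r / r) \<partial>lborel)
      + (\<integral>\<^sup>+ r \<in> {m/2..}. ennreal (2 * rho m r * r * tilde_energy r) \<partial>lborel)"
    unfolding PJ_def split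
    using meas_rho meas_tilde by (simp add: nn_integral_add nn_integral_cmult)
  also have "ennreal (24 * J^2) * (\<integral>\<^sup>+ r \<in> {m/2..}. ennreal (rho m r / r) \<partial>lborel) = ennreal (J^2 / (4 * m^2))"
    using m_pos by (simp add: nn_integral_rho_div ennreal_mult[symmetric] field_simps)
  finally show ?thesis .
qed

lemma nn_integral_tilde_energy_eq_0_iff:
  "(\<integral>\<^sup>+ r \<in> {m/2..}. ennreal (2 * rho m r * r * tilde_energy r) \<partial>lborel) = 0
    \<longleftrightarrow> (\<forall>r z. m/2 \<le> r \<and> -1 \<le> z \<and> z \<le> 1 \<longrightarrow> f r z = 0)"
proof
  assume zero: "(\<integral>\<^sup>+ r \<in> {m/2..}. ennreal (2 * rho m r * r * tilde_energy r) \<partial>lborel) = 0"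
  have "tilde_energy r = 0" if r: "m/2 < r" for r
  proof -
    have "2 * rho m r * r * tilde_energy r = 0"
      by (rule continuous_eq_0_if_nn_integral_eq_0[OF _ _ zero])
         (use m_pos r continuous_on_rho continuous_on_tilde_energy rho_nonneg tilde_energy_nonneg
           in \<open>auto intro!: continuous_intros\<close>)
    then show ?thesis
      using rho_pos[OF m_pos r] r m_pos by simp
  qed
  then show "\<forall>r z. m/2 \<le> r \<and> -1 \<le> z \<and> z \<le> 1 \<longrightarrow> f r z = 0"
    using m_pos by (auto intro: f_eq_0_if_tilde_energy_eq_0)
next
  assume "\<forall>r z. m/2 \<le> r \<and> -1 \<le> z \<and> z \<le> 1 \<longrightarrow> f r z = 0"
  then have weighted_tilde_0: "2 * rho m r * r * tilde_energy r = 0" if "m/2 \<le> r" for r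
    using that m_pos tilde_energy_eq_0_if_f_eq_0[of r]
    by (cases "r = m/2") (auto simp: rho_def)
  have integrand_0: "ennreal (2 * rho m r * r * tilde_energy r) * indicator {m/2..} r = 0" for r
    by (cases "m/2 \<le> r") (simp_all add: weighted_tilde_0)
  show "(\<integral>\<^sup>+ r \<in> {m/2..}. ennreal (2 * rho m r * r * tilde_energy r) \<partial>lborel) = 0"
    by (simp only: integrand_0) simp
qed

end

theorem mainTheorem5:
  fixes m J c :: real and f :: "real \<Rightarrow> real \<Rightarrow> real"
  assumes "m > 0"
    and "smooth_on2 ({m/2..} \<times> {-1..1}) (\<lambda>(r, z). f r z)"
  shows "(\<forall>r \<ge> m/2.
            (\<integral>\<^sup>+ z \<in> {-1..1}. ennreal ((deriv (\<lambda>y. omega f J c r y) z)^2 / (1 - z^2)) \<partial>lborel)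
          = (\<integral>\<^sup>+ z \<in> {-1..1}. ennreal ((deriv (\<lambda>y. omega_tilde f r y) z)^2 / (1 - z^2)) \<partial>lborel)
            + ennreal (12 * J^2))
       \<and> PJ m f J c \<ge> ennreal (J^2 / (4 * m^2))
       \<and> (PJ m f J c = ennreal (J^2 / (4 * m^2)) \<longleftrightarrow>
            (\<forall>r z. r \<ge> m/2 \<and> -1 \<le> z \<and> z \<le> 1 \<longrightarrow> f r z = 0))"
proof -
  obtain D1 D2 where "C1_on_half_strip (m/2) f D1 D2"
    using smooth_on2_imp_C1_on_half_strip[OF assms(2)] .
  then interpret PJ_setting m f D1 D2
    using assms(1) by (simp add: PJ_setting_def PJ_setting_axioms_def)
  let ?E = "\<integral>\<^sup>+ r \<in> {m/2..}. ennreal (2 * rho m r * r * tilde_energy r) \<partial>lborel"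
  have "PJ m f J c = ennreal (J^2 / (4 * m^2)) \<longleftrightarrow> ?E = 0"
    using PJ_eq_nn_integral_tilde_energy ennreal_add_left_cancel[of "ennreal (J^2 / (4 * m^2))" ?E 0]
    by simp
  then show ?thesis
    using nn_integral_deriv_omega_z_square_div_eq_tilde PJ_eq_nn_integral_tilde_energy
      nn_integral_tilde_energy_eq_0_iff
    by simp
qed

end
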